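(* Let $M,N$ be hyperbolic surfaces with $W_M=W_N$, and let $l\in L_0$. Then $$\bigl|\, l\,P_{\mathrm{odd}} \cap (L_0\setminus\{l\})\,\mathbb{N}^+ \bigr| \le |L_0|-1,$$ i.e. at most $|L_0|-1$ of the numbers $pl$, $p$ an odd prime, are positive integer multiples of an element of $L_0$ other than $l$.
   Context: A hyperbolic surface is a compact Riemannian 2-manifold without boundary of constant curvature $-1$, possibly non-orientable or disconnected; geodesics are oriented closed geodesics. For a geodesic $\gamma$ with length $l(\gamma)$ and imprimitivity index $\nu(\gamma)$, set $\mathrm{wt}(\gamma)=1/\nu(\gamma)$ if $\gamma$ is orientation-preserving and $\mathrm{wt}(\gamma)=\frac1{\nu(\gamma)}\tanh(l(\gamma)/2)$ if orientation-reversing; $W_M(l)=\sum_{l(\gamma)=l}\mathrm{wt}(\gamma)$. Let $\alpha_M(l)$ (resp. $\beta_M(l)$) be the number of primitive orientation-preserving (resp. orientation-reversing) geodesics of $M$ of length exactly $l$; $a(l)=\alpha_M(l)-\alpha_N(l)$, $b(l)=\beta_N(l)-\beta_M(l)$; $L=\{l>0: a(l)\neq0\text{ or }b(l)\neq0\}$; $L_0=\{l\in L: l\text{ is not of the form } kl' \text{ with } l'\in L,\ l'\neq l,\ k\in\mathbb{N}^+\}$. $P_{\mathrm{odd}}$ is the set of odd primes, $lP_{\mathrm{odd}}=\{lp: p\in P_{\mathrm{odd}}\}$, and $(L_0\setminus\{l\})\mathbb{N}^+=\{kl' : l'\in L_0\setminus\{l\},\ k\in\mathbb{N}^+\}$.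 *)

theory Defs
  imports Complex_Main "HOL-Computational_Algebra.Primes"
begin

text \<open>A hyperbolic surface M enters the statement only through its primitive
length-spectrum counts: alpha l (number of primitive orientation-preserving
oriented closed geodesics of length l) and beta l (same, orientation-reversing).\<close>

definition spectral_datum :: "(real \<Rightarrow> nat) \<Rightarrow> (real \<Rightarrow> nat) \<Rightarrow> bool" where
  "spectral_datum \<alpha> \<beta> \<longleftrightarrow>
     (\<forall>l. l \<le> 0 \<longrightarrow> \<alpha> l = 0 \<and> \<beta> l = 0) \<and>
     (\<forall>T. finite {l. l \<le> T \<and> (\<alpha> l \<noteq> 0 \<or> \<beta> l \<noteq> 0)})"

text \<open>W_M(l): every closed geodesic of length l with imprimitivity index k is the
k-th iterate of a unique primitive geodesic of length l/k; it is orientation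
reversing iff the primitive one is and k is odd. Its weight is 1/k, resp.
(1/k) tanh(l/2).\<close>

definition Wfun :: "(real \<Rightarrow> nat) \<Rightarrow> (real \<Rightarrow> nat) \<Rightarrow> real \<Rightarrow> real" where
  "Wfun \<alpha> \<beta> l =
     (\<Sum>k\<in>{k::nat. 1 \<le> k \<and> (\<alpha> (l / real k) \<noteq> 0 \<or> \<beta> (l / real k) \<noteq> 0)}.
        real (\<alpha> (l / real k)) / real k
      + real (\<beta> (l / real k)) * (if odd k then tanh (l / 2) else 1) / real k)"

definition Lset :: "(real \<Rightarrow> nat) \<Rightarrow> (real \<Rightarrow> nat) \<Rightarrow> (real \<Rightarrow> nat) \<Rightarrow> (real \<Rightarrow> nat) \<Rightarrow> real set" where
  "Lset \<alpha>M \<beta>M \<alpha>N \<beta>N =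
     {l. l > 0 \<and> (int (\<alpha>M l) - int (\<alpha>N l) \<noteq> 0 \<or> int (\<beta>N l) - int (\<beta>M l) \<noteq> 0)}"

definition L0set :: "real set \<Rightarrow> real set" where
  "L0set L = {l \<in> L. \<not> (\<exists>l'\<in>L. l' \<noteq> l \<and> (\<exists>k::nat. k \<ge> 1 \<and> l = real k * l'))}"

definition odd_prime_multiples :: "real \<Rightarrow> real set" where
  "odd_prime_multiples l = {l * real p | p::nat. prime p \<and> odd p}"

definition pos_multiples :: "real set \<Rightarrow> real set" where
  "pos_multiples A = {real k * l' | k l'. l' \<in> A \<and> k \<ge> (1::nat)}"

end

theory Submission
  imports Defs
begin

text \<open>If \<open>p l\<close> and \<open>q l\<close> are both integer multiples \<open>k l'\<close>, \<open>k' l'\<close> of some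
\<open>l' \<noteq> l\<close> in \<open>L\<^sub>0\<close>, then \<open>p k' = q k\<close>; for distinct primes this forces \<open>p | k\<close>,
making \<open>l = (k/p) l'\<close> a positive integer multiple of \<open>l'\<close>, which minimality of
\<open>l\<close> in \<open>L\<^sub>0\<close> excludes. So every element of \<open>L\<^sub>0 - {l}\<close> accounts for at most one
prime multiple of \<open>l\<close>.\<close>

lemma pos_multiples_singleton_iff:
  "x \<in> pos_multiples {l'} \<longleftrightarrow> (\<exists>k::nat. k \<ge> 1 \<and> x = real k * l')"
  unfolding pos_multiples_def by blast

lemma prime_eq_if_multiples_of_common_length:
  fixes l l' :: real and p q k k' :: nat
  assumes "l > 0" "prime p" "prime q"
    and p_mult: "real p * l = real k * l'" and q_mult: "real q * l = real k' * l'"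
    and not_mult: "l \<notin> pos_multiples {l'}"
  shows "p = q"
proof (rule ccontr)
  assume "p \<noteq> q"
  have "real (p * k') * l = real k' * (real p * l)"
    by simp
  also have "\<dots> = real k * (real q * l)"
    unfolding p_mult q_mult by simp
  also have "\<dots> = real (q * k) * l"
    by simp
  finally have "p * k' = q * k"
    using \<open>l > 0\<close> by (metis mult_cancel_right of_nat_eq_iff order_less_irrefl)
  then have "p dvd q * k"
    by (metis dvd_triv_left)
  moreover have "\<not> p dvd q"
    using \<open>prime p\<close> \<open>prime q\<close> \<open>p \<noteq> q\<close> primes_dvd_imp_eq by blast
  ultimately have "p dvd k"
    using \<open>prime p\<close> prime_dvd_mult_iff by blast
  then obtain j where "k = p * j" ..
  with p_mult have "real p * l = real p * (real j * l')"
    by simp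
  then have l_eq: "l = real j * l'"
    using prime_gt_0_nat[OF \<open>prime p\<close>] by simp
  with \<open>l > 0\<close> have "j \<ge> 1"
    by (cases j) auto
  with l_eq not_mult show False
    by (auto simp: pos_multiples_singleton_iff)
qed

lemma card_prime_multiples_in_pos_multiples_le:
  fixes l :: real and A :: "real set"
  assumes "l > 0" "finite A"
    and not_mult: "\<And>l'. l' \<in> A \<Longrightarrow> l \<notin> pos_multiples {l'}"
  defines "S \<equiv> {l * real p | p::nat. prime p} \<inter> pos_multiples A"
  shows "finite S \<and> card S \<le> card A"
proof -
  have S_UN: "S = (\<Union>l'\<in>A. S \<inter> pos_multiples {l'})"
    unfolding S_def pos_multiples_def by blast
  have subsingleton: "x = y"
    if "l' \<in> A" and x: "x \<in> S \<inter> pos_multiples {l'}" and y: "y \<in> S \<inter> pos_multiples {l'}"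
    for l' x y
  proof -
    obtain p k where "prime p" "x = l * real p" "x = real k * l'"
      using x unfolding S_def Int_iff pos_multiples_singleton_iff by blast
    moreover obtain q k' where "prime q" "y = l * real q" "y = real k' * l'"
      using y unfolding S_def Int_iff pos_multiples_singleton_iff by blast
    ultimately have "p = q"
      using prime_eq_if_multiples_of_common_length[OF \<open>l > 0\<close> _ _ _ _ not_mult[OF \<open>l' \<in> A\<close>]]
      by (metis mult.commute)
    with \<open>x = l * real p\<close> \<open>y = l * real q\<close> show "x = y"
      by simp
  qed
  have piece_finite: "finite (S \<inter> pos_multiples {l'})" if "l' \<in> A" for l'
  proof (cases "S \<inter> pos_multiples {l'} = {}")
    case False
    then obtain x where "x \<in> S \<inter> pos_multiples {l'}" by blast
    with subsingleton[OF that] have "S \<inter> pos_multiples {l'} \<subseteq> {x}" by blast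
    then show ?thesis using finite_subset by blast
  qed simp
  have piece_card: "card (S \<inter> pos_multiples {l'}) \<le> 1" if "l' \<in> A" for l'
    using card_le_Suc0_iff_eq[OF piece_finite[OF that]] subsingleton[OF that] by simp
  have "finite S"
    using S_UN piece_finite \<open>finite A\<close> by (metis finite_UN_I)
  have "card S \<le> (\<Sum>l'\<in>A. card (S \<inter> pos_multiples {l'}))"
    using card_UN_le[OF \<open>finite A\<close>] S_UN by metis
  also have "\<dots> \<le> card A"
    using sum_bounded_above[of A "\<lambda>l'. card (S \<inter> pos_multiples {l'})" 1] piece_card by simp
  finally show ?thesis using \<open>finite S\<close> by blast
qed

lemma L0set_not_pos_multiple:
  assumes "l \<in> L0set L" "l' \<in> L0set L - {l}"
  shows "l \<notin> pos_multiples {l'}"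
  using assms unfolding L0set_def pos_multiples_singleton_iff by blast

lemma card_odd_prime_multiples_in_pos_multiples_L0set_le:
  fixes l :: real and L :: "real set"
  assumes "l \<in> L0set L" "l > 0" "finite (L0set L)"
  shows "finite (odd_prime_multiples l \<inter> pos_multiples (L0set L - {l})) \<and>
    card (odd_prime_multiples l \<inter> pos_multiples (L0set L - {l})) \<le> card (L0set L) - 1"
proof -
  let ?S = "{l * real p | p::nat. prime p} \<inter> pos_multiples (L0set L - {l})"
  have "finite ?S \<and> card ?S \<le> card (L0set L - {l})"
    using card_prime_multiples_in_pos_multiples_le[of l "L0set L - {l}"]
      L0set_not_pos_multiple assms by blast
  moreover have sub: "odd_prime_multiples l \<inter> pos_multiples (L0set L - {l}) \<subseteq> ?S"
    unfolding odd_prime_multiples_def by blast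
  ultimately show ?thesis
    using card_mono[OF _ sub] finite_subset[OF sub] card_Diff_singleton[OF \<open>l \<in> L0set L\<close>]
    by auto
qed

theorem lemma2:
  fixes \<alpha>M \<beta>M \<alpha>N \<beta>N :: "real \<Rightarrow> nat" and l :: real
  assumes "spectral_datum \<alpha>M \<beta>M"
    and "spectral_datum \<alpha>N \<beta>N"
    and "\<forall>x>0. Wfun \<alpha>M \<beta>M x = Wfun \<alpha>N \<beta>N x"
    and "l \<in> L0set (Lset \<alpha>M \<beta>M \<alpha>N \<beta>N)"
  shows "finite (L0set (Lset \<alpha>M \<beta>M \<alpha>N \<beta>N)) \<longrightarrow>
    (finite (odd_prime_multiples l \<inter> pos_multiples (L0set (Lset \<alpha>M \<beta>M \<alpha>N \<beta>N) - {l})) \<and>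
     card (odd_prime_multiples l \<inter> pos_multiples (L0set (Lset \<alpha>M \<beta>M \<alpha>N \<beta>N) - {l}))
       \<le> card (L0set (Lset \<alpha>M \<beta>M \<alpha>N \<beta>N)) - 1)"
proof -
  have "l > 0"
    using assms(4) unfolding L0set_def Lset_def by simp
  with assms(4) show ?thesis
    using card_odd_prime_multiples_in_pos_multiples_L0set_le by blast
qed

end
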